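(* Let $\mathcal{F}$ be one of the crash or omission failure models $\mathit{Crash}_t$, $\mathit{ComCrash}_t$, $SO_t$, $RO_t$, $GO_t$, let $\mathcal{E}$ be an information exchange and $P$ a decision protocol, and let $p$ be an atomic proposition whose truth value at a point $(r,m)$ of $\mathcal{I}_{P,\mathcal{E},\mathcal{F}}$ depends only on the local states $r_1(m),\dots,r_n(m)$ of the agents. Then for every agent $i$, the formula $B^{\mathcal{N}}_i\,CB_{\mathcal{N}}\,p\Leftrightarrow B^{\mathcal{A}}_i\,CB_{\mathcal{A}}\,p$ is valid in $\mathcal{I}_{P,\mathcal{E},\mathcal{F}}$.
   Context: Agents $\mathrm{Agt}=\{1,\dots,n\}$; decision values $V$; actions $A_i=\{\mathtt{noop}\}\cup\{\mathtt{decide}_i(v):v\in V\}$. An information exchange $\mathcal{E}$ gives each agent $i$ a tuple $(L_i,I_i,M_i,\mu_i,\delta_i)$: local states $L_i$ of form $\langle\mathit{init}_i,\mathit{time}_i,\dots\rangle$ (for the hard crash model also a special state $\mathit{crashed}$), initial states $I_i$, messages $M_i\ni\bot$ ($\bot$ = no message), $\mu_i:L_i\times A_i\to(\mathrm{Agt}\to M_i)$, $\delta_i:L_i\times A_i\times\prod_jM_j\to L_i$ (preserving $\mathit{init}_i$, incrementing $\mathit{time}_i$). A decision protocol is $P=(P_i:L_i\to A_i)_i$. A failure model $(L^*_e,I_e,\delta_e,\mathit{Adv})$ has environment states, initial ones, update $\delta_e$, and adversaries $(\Delta^t,\Delta^r,\Delta^s)$ with $\Delta^t,\Delta^r:\mathbb{N}\times\mathrm{Agt}\times\mathrm{Agt}\times\bigcup_iM_i\to\bigcup_iM_i$,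 $\Delta^s_i:\mathbb{N}\times L_i\to L_i$. Runs $r$ of $\mathcal{I}_{P,\mathcal{E},\mathcal{F}}$: $r(0)=((s_e,\alpha),s_1,\dots,s_n)$ with $s_e\in I_e,\alpha\in\mathit{Adv},s_i\in I_i$; from $r(k)=((s_e,\alpha),s_1,\dots,s_n)$, $r(k+1)=((\delta_e(s_e,(a_1,\dots,a_n)),\alpha),s'_1,\dots,s'_n)$ with $a_i=P_i(s_i)$, $m_{i,j}=\mu_i(s_i,a_i)(j)$, $m'_{i,j}=\Delta^r(k,i,j,\Delta^t(k,i,j,m_{i,j}))$, $s^*_j=\delta_j(s_j,a_j,(m'_{1,j},\dots,m'_{n,j}))$, $s'_j=\Delta^s_j(k,s^*_j)$. An agent has a fault in a round if its sent messages are altered by $\Delta^t$, its received messages altered by $\Delta^r$, or its updated state altered by $\Delta^s$. $\mathcal{N}(r,m)$ = agents with no fault in any round of $r$; $\mathcal{A}(r,m)$ = agents with no fault in rounds $1..m$. Failure models (a component is "correct" for an agent if it acts as the identity on that agent's state / sent messages / received messages): $\mathit{Crash}_t$: at most $t$ agents crash; $\Delta^r$ correct; an agent crashing in round $k+1$ has $\Delta^s_i(k',\cdot)\equiv\mathit{crashed}$ for $k'\ge k$, sends in round $k+1$ only to agents outside some $J\subseteq\mathrm{Agt}$ (messages to $J$ become $\bot$), and sends only $\bot$ afterwards; non-crashing agents correct. $\mathit{ComCrash}_t$: same but $\Delta^s$ correct for all and no crashed state. $SO_t$: $\Delta^s,\Delta^r$ correct; at most $t$ agents may have messages they send replaced by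 $\bot$. $RO_t$: $\Delta^s,\Delta^t$ correct; at most $t$ agents may have messages they receive replaced by $\bot$. $GO_t$: $\Delta^s$ correct; at most $t$ agents may have sending and/or receiving omissions. $(r,m)\sim_i(r',m')$ iff $r_i(m)=r'_i(m')$; $K_i\phi$ holds iff $\phi$ holds at all $\sim_i$-related points. For an indexical set $S$: $B^S_i\phi:=K_i(i\in S\Rightarrow\phi)$, $E^B_S\phi:=\bigwedge_{i\in S}B^S_i\phi$, $CB_S\phi:=\bigwedge_{k\ge1}(E^B_S)^k\phi$. *)

theory Defs
  imports Main
begin

text \<open>Agents are the elements of a finite type 'a (so Agt = UNIV, n = CARD('a)).
  Messages are of type 'm option, where None plays the role of the empty message (bottom).\<close>

datatype 'v action = Noop | Decide 'v

datatype ('i, 'x) lstate = LS (linit: 'i) (ltime: nat) (lrest: 'x) | Crashed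

type_synonym 'm msg = "'m option"

record ('a, 'i, 'x, 'm, 'v) iexchange =
  Lset  :: "'a \<Rightarrow> ('i, 'x) lstate set"
  Iset  :: "'a \<Rightarrow> ('i, 'x) lstate set"
  Mset  :: "'a \<Rightarrow> 'm msg set"
  mu    :: "'a \<Rightarrow> ('i, 'x) lstate \<Rightarrow> 'v action \<Rightarrow> 'a \<Rightarrow> 'm msg"
  delta :: "'a \<Rightarrow> ('i, 'x) lstate \<Rightarrow> 'v action \<Rightarrow> ('a \<Rightarrow> 'm msg) \<Rightarrow> ('i, 'x) lstate"

datatype fkind = KCrash | KComCrash | KSO | KRO | KGO

definition wf_exchange :: "fkind \<Rightarrow> ('a, 'i, 'x, 'm, 'v) iexchange \<Rightarrow> bool" where
  "wf_exchange k E \<longleftrightarrow>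
     (\<forall>i. Iset E i \<subseteq> Lset E i \<and> Crashed \<notin> Iset E i \<and> None \<in> Mset E i
        \<and> (Crashed \<in> Lset E i \<longleftrightarrow> k = KCrash)
        \<and> (\<forall>s\<in>Lset E i. \<forall>a j. mu E i s a j \<in> Mset E i)
        \<and> (\<forall>s\<in>Lset E i. \<forall>a ms. (\<forall>j. ms j \<in> Mset E j) \<longrightarrow> delta E i s a ms \<in> Lset E i)
        \<and> (\<forall>s\<in>Lset E i. s \<noteq> Crashed \<longrightarrow> (\<forall>a ms. (\<forall>j. ms j \<in> Mset E j) \<longrightarrow>
              delta E i s a ms \<noteq> Crashed
            \<and> linit (delta E i s a ms) = linit s
            \<and> ltime (delta E i s a ms) = Suc (ltime s))))"

type_synonym ('a, 'i, 'x, 'v) protocol = "'a \<Rightarrow> ('i, 'x) lstate \<Rightarrow> 'v action"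

text \<open>Round k+1 of a run uses the adversary components at index k.\<close>
record ('a, 'i, 'x, 'm) adversary =
  Dt :: "nat \<Rightarrow> 'a \<Rightarrow> 'a \<Rightarrow> 'm msg \<Rightarrow> 'm msg"
  Dr :: "nat \<Rightarrow> 'a \<Rightarrow> 'a \<Rightarrow> 'm msg \<Rightarrow> 'm msg"
  Ds :: "'a \<Rightarrow> nat \<Rightarrow> ('i, 'x) lstate \<Rightarrow> ('i, 'x) lstate"

record ('e, 'a, 'i, 'x, 'm, 'v) fmodel =
  Le  :: "'e set"
  Ie  :: "'e set"
  de  :: "'e \<Rightarrow> ('a \<Rightarrow> 'v action) \<Rightarrow> 'e"
  Adv :: "('a, 'i, 'x, 'm) adversary set"

definition send_ok :: "('a, 'i, 'x, 'm, 'v) iexchange \<Rightarrow> ('a, 'i, 'x, 'm) adversary \<Rightarrow> nat \<Rightarrow> 'a \<Rightarrow> bool" where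
  "send_ok E \<alpha> k i \<longleftrightarrow> (\<forall>j. \<forall>m\<in>Mset E i. Dt \<alpha> k i j m = m)"

definition recv_ok :: "('a, 'i, 'x, 'm, 'v) iexchange \<Rightarrow> ('a, 'i, 'x, 'm) adversary \<Rightarrow> nat \<Rightarrow> 'a \<Rightarrow> bool" where
  "recv_ok E \<alpha> k j \<longleftrightarrow> (\<forall>i. \<forall>m\<in>Mset E i. Dr \<alpha> k i j m = m)"

definition state_ok :: "('a, 'i, 'x, 'm, 'v) iexchange \<Rightarrow> ('a, 'i, 'x, 'm) adversary \<Rightarrow> nat \<Rightarrow> 'a \<Rightarrow> bool" where
  "state_ok E \<alpha> k i \<longleftrightarrow> (\<forall>s\<in>Lset E i. Ds \<alpha> i k s = s)"

definition faulty :: "('a, 'i, 'x, 'm, 'v) iexchange \<Rightarrow> ('a, 'i, 'x, 'm) adversary \<Rightarrow> nat \<Rightarrow> 'a \<Rightarrow> bool" where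
  "faulty E \<alpha> k i \<longleftrightarrow> \<not> (send_ok E \<alpha> k i \<and> recv_ok E \<alpha> k i \<and> state_ok E \<alpha> k i)"

text \<open>Crash behaviour of agent i crashing in round k+1, only reaching agents outside J in that round.
  In the hard crash model (hard = True) its state becomes crashed from time k+1 on.\<close>
definition crash_behaviour :: "bool \<Rightarrow> ('a, 'i, 'x, 'm, 'v) iexchange \<Rightarrow> ('a, 'i, 'x, 'm) adversary \<Rightarrow> 'a \<Rightarrow> bool" where
  "crash_behaviour hard E \<alpha> i \<longleftrightarrow>
     (\<exists>k J.
        (\<forall>k'<k. send_ok E \<alpha> k' i)
      \<and> (\<forall>j. \<forall>m\<in>Mset E i. Dt \<alpha> k i j m = (if j \<in> J then None else m))
      \<and> (\<forall>k'>k. \<forall>j. \<forall>m\<in>Mset E i. Dt \<alpha> k' i j m = None)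
      \<and> (if hard then (\<forall>k'<k. state_ok E \<alpha> k' i) \<and> (\<forall>k'\<ge>k. \<forall>s\<in>Lset E i. Ds \<alpha> i k' s = Crashed)
         else (\<forall>k'. state_ok E \<alpha> k' i)))"

definition correct_all :: "('a, 'i, 'x, 'm, 'v) iexchange \<Rightarrow> ('a, 'i, 'x, 'm) adversary \<Rightarrow> 'a \<Rightarrow> bool" where
  "correct_all E \<alpha> i \<longleftrightarrow> (\<forall>k. send_ok E \<alpha> k i \<and> recv_ok E \<alpha> k i \<and> state_ok E \<alpha> k i)"

definition send_omit :: "('a, 'i, 'x, 'm, 'v) iexchange \<Rightarrow> ('a, 'i, 'x, 'm) adversary \<Rightarrow> 'a \<Rightarrow> bool" where
  "send_omit E \<alpha> i \<longleftrightarrow> (\<forall>k j. \<forall>m\<in>Mset E i. Dt \<alpha> k i j m \<in> {m, None})"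

definition recv_omit :: "('a, 'i, 'x, 'm, 'v) iexchange \<Rightarrow> ('a, 'i, 'x, 'm) adversary \<Rightarrow> 'a \<Rightarrow> bool" where
  "recv_omit E \<alpha> j \<longleftrightarrow> (\<forall>k i. \<forall>m\<in>Mset E i. Dr \<alpha> k i j m \<in> {m, None})"

definition adv_set :: "fkind \<Rightarrow> nat \<Rightarrow> ('a::finite, 'i, 'x, 'm, 'v) iexchange \<Rightarrow> ('a, 'i, 'x, 'm) adversary set" where
  "adv_set k t E = {\<alpha>. \<exists>C::'a set. card C \<le> t \<and> (\<forall>i. i \<notin> C \<longrightarrow> correct_all E \<alpha> i) \<and>
     (case k of
        KCrash \<Rightarrow> (\<forall>i j. recv_ok E \<alpha> i j) \<and> (\<forall>i\<in>C. crash_behaviour True E \<alpha> i)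
      | KComCrash \<Rightarrow> (\<forall>i j. recv_ok E \<alpha> i j) \<and> (\<forall>i\<in>C. crash_behaviour False E \<alpha> i)
      | KSO \<Rightarrow> (\<forall>k i. recv_ok E \<alpha> k i \<and> state_ok E \<alpha> k i) \<and> (\<forall>i\<in>C. send_omit E \<alpha> i)
      | KRO \<Rightarrow> (\<forall>k i. send_ok E \<alpha> k i \<and> state_ok E \<alpha> k i) \<and> (\<forall>i\<in>C. recv_omit E \<alpha> i)
      | KGO \<Rightarrow> (\<forall>k i. state_ok E \<alpha> k i) \<and> (\<forall>i\<in>C. send_omit E \<alpha> i \<and> recv_omit E \<alpha> i))}"

definition is_fmodel :: "fkind \<Rightarrow> nat \<Rightarrow> ('a::finite, 'i, 'x, 'm, 'v) iexchange \<Rightarrow> ('e, 'a, 'i, 'x, 'm, 'v) fmodel \<Rightarrow> bool" where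
  "is_fmodel k t E F \<longleftrightarrow> Ie F \<subseteq> Le F \<and> (\<forall>e\<in>Le F. \<forall>a. de F e a \<in> Le F) \<and> Adv F = adv_set k t E"

type_synonym ('e, 'a, 'i, 'x, 'm) gstate = "('e \<times> ('a, 'i, 'x, 'm) adversary) \<times> ('a \<Rightarrow> ('i, 'x) lstate)"
type_synonym ('e, 'a, 'i, 'x, 'm) run = "nat \<Rightarrow> ('e, 'a, 'i, 'x, 'm) gstate"

definition gstep :: "('a, 'i, 'x, 'v) protocol \<Rightarrow> ('a, 'i, 'x, 'm, 'v) iexchange \<Rightarrow> ('e, 'a, 'i, 'x, 'm, 'v) fmodel
    \<Rightarrow> nat \<Rightarrow> ('e, 'a, 'i, 'x, 'm) gstate \<Rightarrow> ('e, 'a, 'i, 'x, 'm) gstate" where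
  "gstep P E F k g = (let se = fst (fst g); \<alpha> = snd (fst g); s = snd g; a = (\<lambda>i. P i (s i)) in
     ((de F se a, \<alpha>),
      (\<lambda>j. Ds \<alpha> j k (delta E j (s j) (a j)
              (\<lambda>i. Dr \<alpha> k i j (Dt \<alpha> k i j (mu E i (s i) (a i) j)))))))"

primrec mkrun :: "('a, 'i, 'x, 'v) protocol \<Rightarrow> ('a, 'i, 'x, 'm, 'v) iexchange \<Rightarrow> ('e, 'a, 'i, 'x, 'm, 'v) fmodel
    \<Rightarrow> ('e, 'a, 'i, 'x, 'm) gstate \<Rightarrow> ('e, 'a, 'i, 'x, 'm) run" where
  "mkrun P E F g0 0 = g0"
| "mkrun P E F g0 (Suc k) = gstep P E F k (mkrun P E F g0 k)"

definition runs :: "('a, 'i, 'x, 'v) protocol \<Rightarrow> ('a, 'i, 'x, 'm, 'v) iexchange \<Rightarrow> ('e, 'a, 'i, 'x, 'm, 'v) fmodel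
    \<Rightarrow> ('e, 'a, 'i, 'x, 'm) run set" where
  "runs P E F = {mkrun P E F ((se, \<alpha>), s) | se \<alpha> s. se \<in> Ie F \<and> \<alpha> \<in> Adv F \<and> (\<forall>i. s i \<in> Iset E i)}"

definition lstate_of :: "('e, 'a, 'i, 'x, 'm) run \<Rightarrow> nat \<Rightarrow> 'a \<Rightarrow> ('i, 'x) lstate" where
  "lstate_of r m i = snd (r m) i"

definition adv_of :: "('e, 'a, 'i, 'x, 'm) run \<Rightarrow> ('a, 'i, 'x, 'm) adversary" where
  "adv_of r = snd (fst (r 0))"

text \<open>N(r,m): agents with no fault in any round; A(r,m): no fault in rounds 1..m
  (round k+1 corresponds to adversary index k).\<close>
definition Nset :: "('a, 'i, 'x, 'm, 'v) iexchange \<Rightarrow> ('e, 'a, 'i, 'x, 'm) run \<Rightarrow> nat \<Rightarrow> 'a set" where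
  "Nset E r m = {i. \<forall>k. \<not> faulty E (adv_of r) k i}"

definition Aset :: "('a, 'i, 'x, 'm, 'v) iexchange \<Rightarrow> ('e, 'a, 'i, 'x, 'm) run \<Rightarrow> nat \<Rightarrow> 'a set" where
  "Aset E r m = {i. \<forall>k<m. \<not> faulty E (adv_of r) k i}"

type_synonym ('e, 'a, 'i, 'x, 'm) form = "('e, 'a, 'i, 'x, 'm) run \<Rightarrow> nat \<Rightarrow> bool"

definition Kn :: "('e, 'a, 'i, 'x, 'm) run set \<Rightarrow> 'a \<Rightarrow> ('e, 'a, 'i, 'x, 'm) form \<Rightarrow> ('e, 'a, 'i, 'x, 'm) form" where
  "Kn R i \<phi> r m \<longleftrightarrow> (\<forall>r'\<in>R. \<forall>m'. lstate_of r m i = lstate_of r' m' i \<longrightarrow> \<phi> r' m')"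

definition Bel :: "('e, 'a, 'i, 'x, 'm) run set \<Rightarrow> (('e, 'a, 'i, 'x, 'm) run \<Rightarrow> nat \<Rightarrow> 'a set) \<Rightarrow> 'a
    \<Rightarrow> ('e, 'a, 'i, 'x, 'm) form \<Rightarrow> ('e, 'a, 'i, 'x, 'm) form" where
  "Bel R S i \<phi> = Kn R i (\<lambda>r m. i \<in> S r m \<longrightarrow> \<phi> r m)"

definition EB :: "('e, 'a, 'i, 'x, 'm) run set \<Rightarrow> (('e, 'a, 'i, 'x, 'm) run \<Rightarrow> nat \<Rightarrow> 'a set)
    \<Rightarrow> ('e, 'a, 'i, 'x, 'm) form \<Rightarrow> ('e, 'a, 'i, 'x, 'm) form" where
  "EB R S \<phi> r m \<longleftrightarrow> (\<forall>i\<in>S r m. Bel R S i \<phi> r m)"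

definition CB :: "('e, 'a, 'i, 'x, 'm) run set \<Rightarrow> (('e, 'a, 'i, 'x, 'm) run \<Rightarrow> nat \<Rightarrow> 'a set)
    \<Rightarrow> ('e, 'a, 'i, 'x, 'm) form \<Rightarrow> ('e, 'a, 'i, 'x, 'm) form" where
  "CB R S \<phi> r m \<longleftrightarrow> (\<forall>k\<ge>1. (EB R S ^^ k) \<phi> r m)"

definition atom :: "(('a \<Rightarrow> ('i, 'x) lstate) \<Rightarrow> bool) \<Rightarrow> ('e, 'a, 'i, 'x, 'm) form" where
  "atom p r m \<longleftrightarrow> p (lstate_of r m)"

end

theory Submission
  imports Defs
begin

text \<open>Since \<open>N(r,m) \<subseteq> A(r,m)\<close>, every level of \<open>E\<^sup>B\<close> relative to \<open>A\<close> implies the corresponding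
  level relative to \<open>N\<close>, which gives one direction. For the other, every point \<open>(r,m)\<close> has a
  twin \<open>(r',m)\<close> with the same local states and \<open>N(r',m) = A(r,m)\<close>: run the protocol from the
  same initial states under the adversary that agrees with that of \<open>r\<close> in rounds \<open>1..m\<close> and
  makes the agents of \<open>A(r,m)\<close> correct afterwards. This adversary only removes faults, so it
  belongs to each of the five failure models. As \<open>p\<close> depends only on the local states,
  \<open>(E\<^sup>B\<^sub>N)\<^sup>k p\<close> at the twin yields \<open>(E\<^sup>B\<^sub>A)\<^sup>k p\<close> at the original point.\<close>

lemma EB_funpow_antimono:
  assumes "\<And>r m. S r m \<subseteq> T r m" and "(EB R T ^^ k) \<phi> r m"
  shows "(EB R S ^^ k) \<phi> r m"
  using assms(2)
proof (induction k arbitrary: r m)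
  case (Suc k)
  then show ?case using assms(1) by (simp add: EB_def Bel_def Kn_def) blast
qed simp

lemma CB_antimono:
  assumes "\<And>r m. S r m \<subseteq> T r m" and "CB R T \<phi> r m"
  shows "CB R S \<phi> r m"
  using assms(2) EB_funpow_antimono[of S T, OF assms(1)] by (simp add: CB_def)

lemma EB_funpow_twin:
  assumes twins: "\<And>r m. r \<in> R \<Longrightarrow> \<exists>r'\<in>R. lstate_of r' m = lstate_of r m \<and> S r' m = T r m"
    and local: "\<And>r r' m. lstate_of r' m = lstate_of r m \<Longrightarrow> \<phi> r' m = \<phi> r m"
    and "lstate_of r' m = lstate_of r m" "S r' m = T r m" "(EB R S ^^ k) \<phi> r' m"
  shows "(EB R T ^^ k) \<phi> r m"
  using assms(3-)
proof (induction k arbitrary: r r' m)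
  case 0
  then show ?case using local[of r' m r] by simp
next
  case (Suc k)
  show ?case
    unfolding funpow.simps comp_apply EB_def[of R T "(EB R T ^^ k) \<phi>"] Bel_def Kn_def
  proof (intro ballI allI impI)
    fix j y n
    assume "j \<in> T r m" "y \<in> R" "lstate_of r m j = lstate_of y n j" "j \<in> T y n"
    obtain y' where "y' \<in> R" and same_y': "lstate_of y' n = lstate_of y n" "S y' n = T y n"
      using twins \<open>y \<in> R\<close> by blast
    have "Bel R S j ((EB R S ^^ k) \<phi>) r' m"
      using Suc.prems(2,3) \<open>j \<in> T r m\<close> by (simp add: EB_def[of R S "(EB R S ^^ k) \<phi>"])
    moreover have "lstate_of r' m j = lstate_of y' n j"
      using Suc.prems(1) \<open>lstate_of r m j = lstate_of y n j\<close> same_y'(1) by simp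
    ultimately have "(EB R S ^^ k) \<phi> y' n"
      using \<open>y' \<in> R\<close> \<open>j \<in> T y n\<close> same_y'(2) unfolding Bel_def Kn_def by auto
    then show "(EB R T ^^ k) \<phi> y n"
      by (rule Suc.IH[OF same_y'])
  qed
qed

lemma CB_twin:
  assumes "\<And>r m. r \<in> R \<Longrightarrow> \<exists>r'\<in>R. lstate_of r' m = lstate_of r m \<and> S r' m = T r m"
    and "\<And>r r' m. lstate_of r' m = lstate_of r m \<Longrightarrow> \<phi> r' m = \<phi> r m"
    and "lstate_of r' m = lstate_of r m" "S r' m = T r m" "CB R S \<phi> r' m"
  shows "CB R T \<phi> r m"
  using assms(5) EB_funpow_twin[of R S T \<phi> r' m r, OF assms(1-4)] by (simp add: CB_def)

lemma Bel_CB_iff_of_twins: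
  assumes sub: "\<And>r m. S r m \<subseteq> T r m"
    and twins: "\<And>r m. r \<in> R \<Longrightarrow> \<exists>r'\<in>R. lstate_of r' m = lstate_of r m \<and> S r' m = T r m"
    and local: "\<And>r r' m. lstate_of r' m = lstate_of r m \<Longrightarrow> \<phi> r' m = \<phi> r m"
  shows "Bel R S i (CB R S \<phi>) r m \<longleftrightarrow> Bel R T i (CB R T \<phi>) r m"
proof
  assume bel_S: "Bel R S i (CB R S \<phi>) r m"
  show "Bel R T i (CB R T \<phi>) r m"
    unfolding Bel_def Kn_def
  proof (intro ballI allI impI)
    fix y n assume "y \<in> R" "lstate_of r m i = lstate_of y n i" "i \<in> T y n"
    obtain y' where "y' \<in> R" and same_y': "lstate_of y' n = lstate_of y n" "S y' n = T y n"
      using twins \<open>y \<in> R\<close> by blast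
    have "lstate_of r m i = lstate_of y' n i" "i \<in> S y' n"
      using \<open>lstate_of r m i = lstate_of y n i\<close> \<open>i \<in> T y n\<close> same_y' by simp_all
    then have "CB R S \<phi> y' n"
      using bel_S \<open>y' \<in> R\<close> unfolding Bel_def Kn_def by blast
    then show "CB R T \<phi> y n"
      using CB_twin[of R S T \<phi> y' n y, OF twins local same_y'] by blast
  qed
next
  assume bel_T: "Bel R T i (CB R T \<phi>) r m"
  show "Bel R S i (CB R S \<phi>) r m"
    unfolding Bel_def Kn_def
  proof (intro ballI allI impI)
    fix y n assume "y \<in> R" "lstate_of r m i = lstate_of y n i" "i \<in> S y n"
    then have "CB R T \<phi> y n"
      using bel_T sub[of y n] unfolding Bel_def Kn_def by blast
    then show "CB R S \<phi> y n"
      by (rule CB_antimono[of S T, OF sub])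
  qed
qed

definition heal :: "nat \<Rightarrow> 'a set \<Rightarrow> ('a, 'i, 'x, 'm) adversary \<Rightarrow> ('a, 'i, 'x, 'm) adversary" where
  "heal m A \<alpha> = \<lparr>Dt = (\<lambda>k i j x. if k < m \<or> i \<notin> A then Dt \<alpha> k i j x else x),
                  Dr = (\<lambda>k i j x. if k < m \<or> j \<notin> A then Dr \<alpha> k i j x else x),
                  Ds = (\<lambda>i k s. if k < m \<or> i \<notin> A then Ds \<alpha> i k s else s)\<rparr>"

lemma heal_simps [simp]:
  "Dt (heal m A \<alpha>) k i j x = (if k < m \<or> i \<notin> A then Dt \<alpha> k i j x else x)"
  "Dr (heal m A \<alpha>) k i j x = (if k < m \<or> j \<notin> A then Dr \<alpha> k i j x else x)"
  "Ds (heal m A \<alpha>) i k s = (if k < m \<or> i \<notin> A then Ds \<alpha> i k s else s)"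
  by (simp_all add: heal_def)

lemma heal_preserves_ok:
  "send_ok E \<alpha> k i \<Longrightarrow> send_ok E (heal m A \<alpha>) k i"
  "recv_ok E \<alpha> k i \<Longrightarrow> recv_ok E (heal m A \<alpha>) k i"
  "state_ok E \<alpha> k i \<Longrightarrow> state_ok E (heal m A \<alpha>) k i"
  by (auto simp: send_ok_def recv_ok_def state_ok_def)

lemma faulty_heal_iff:
  "faulty E (heal m A \<alpha>) k i \<longleftrightarrow> faulty E \<alpha> k i \<and> (k < m \<or> i \<notin> A)"
  by (auto simp: faulty_def send_ok_def recv_ok_def state_ok_def)

lemma heal_not_member:
  assumes "i \<notin> A"
  shows "crash_behaviour h E (heal m A \<alpha>) i = crash_behaviour h E \<alpha> i"
    "send_omit E (heal m A \<alpha>) i = send_omit E \<alpha> i"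
    "recv_omit E (heal m A \<alpha>) i = recv_omit E \<alpha> i"
    "correct_all E (heal m A \<alpha>) i = correct_all E \<alpha> i"
  using assms by (simp_all add: crash_behaviour_def send_omit_def recv_omit_def correct_all_def
      send_ok_def recv_ok_def state_ok_def)

lemma correct_all_heal:
  assumes "i \<in> A" "\<forall>k<m. \<not> faulty E \<alpha> k i"
  shows "correct_all E (heal m A \<alpha>) i"
proof -
  have "\<not> faulty E (heal m A \<alpha>) k i" for k
    using assms by (auto simp: faulty_heal_iff)
  then show ?thesis
    by (simp add: correct_all_def faulty_def)
qed

definition fault_pattern :: "fkind \<Rightarrow> ('a, 'i, 'x, 'm, 'v) iexchange \<Rightarrow> ('a, 'i, 'x, 'm) adversary
    \<Rightarrow> 'a set \<Rightarrow> bool" where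
  "fault_pattern kd E \<alpha> C \<longleftrightarrow> (case kd of
        KCrash \<Rightarrow> (\<forall>i j. recv_ok E \<alpha> i j) \<and> (\<forall>i\<in>C. crash_behaviour True E \<alpha> i)
      | KComCrash \<Rightarrow> (\<forall>i j. recv_ok E \<alpha> i j) \<and> (\<forall>i\<in>C. crash_behaviour False E \<alpha> i)
      | KSO \<Rightarrow> (\<forall>k i. recv_ok E \<alpha> k i \<and> state_ok E \<alpha> k i) \<and> (\<forall>i\<in>C. send_omit E \<alpha> i)
      | KRO \<Rightarrow> (\<forall>k i. send_ok E \<alpha> k i \<and> state_ok E \<alpha> k i) \<and> (\<forall>i\<in>C. recv_omit E \<alpha> i)
      | KGO \<Rightarrow> (\<forall>k i. state_ok E \<alpha> k i) \<and> (\<forall>i\<in>C. send_omit E \<alpha> i \<and> recv_omit E \<alpha> i))"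

lemma mem_adv_set_iff:
  "\<alpha> \<in> adv_set kd t E \<longleftrightarrow>
     (\<exists>C. card C \<le> t \<and> (\<forall>i. i \<notin> C \<longrightarrow> correct_all E \<alpha> i) \<and> fault_pattern kd E \<alpha> C)"
  by (simp add: adv_set_def fault_pattern_def)

lemma fault_pattern_heal:
  "fault_pattern kd E \<alpha> C \<Longrightarrow> fault_pattern kd E (heal m A \<alpha>) (C - A)"
  by (cases kd) (auto simp: fault_pattern_def heal_not_member intro: heal_preserves_ok)

lemma heal_in_adv_set:
  fixes \<alpha> :: "('a::finite, 'i, 'x, 'm) adversary"
  assumes "\<alpha> \<in> adv_set kd t E" "\<forall>i\<in>A. \<forall>k<m. \<not> faulty E \<alpha> k i"
  shows "heal m A \<alpha> \<in> adv_set kd t E"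
proof -
  obtain C where card: "card C \<le> t" and correct: "\<forall>i. i \<notin> C \<longrightarrow> correct_all E \<alpha> i"
    and pattern: "fault_pattern kd E \<alpha> C"
    using assms(1) by (auto simp: mem_adv_set_iff)
  have "card (C - A) \<le> t"
    using card card_mono[of C "C - A"] by auto
  moreover have "correct_all E (heal m A \<alpha>) i" if "i \<notin> C - A" for i
  proof (cases "i \<in> A")
    case True
    then show ?thesis using assms(2) by (simp add: correct_all_heal)
  next
    case False
    then show ?thesis using that correct by (simp add: heal_not_member)
  qed
  ultimately show ?thesis
    using fault_pattern_heal[OF pattern] by (auto simp: mem_adv_set_iff)
qed

lemma adv_mkrun: "snd (fst (mkrun P E F g n)) = snd (fst g)"
  by (induction n) (simp_all add: gstep_def Let_def)

lemma mkrun_eq_if_adversaries_agree: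
  assumes "\<forall>k<m. Dt \<beta> k = Dt \<alpha> k \<and> Dr \<beta> k = Dr \<alpha> k \<and> (\<forall>j. Ds \<beta> j k = Ds \<alpha> j k)" "n \<le> m"
  shows "fst (fst (mkrun P E F ((se, \<beta>), s) n)) = fst (fst (mkrun P E F ((se, \<alpha>), s) n))
       \<and> snd (mkrun P E F ((se, \<beta>), s) n) = snd (mkrun P E F ((se, \<alpha>), s) n)"
  using assms(2)
proof (induction n)
  case (Suc n)
  then show ?case
    using assms(1) by (simp add: gstep_def Let_def adv_mkrun)
qed simp

lemma exists_twin_run:
  fixes F :: "('e, 'a::finite, 'i, 'x, 'm, 'v) fmodel"
  assumes "Adv F = adv_set kd t E" "r \<in> runs P E F"
  shows "\<exists>r'\<in>runs P E F. lstate_of r' m = lstate_of r m \<and> Nset E r' m = Aset E r m"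
proof -
  obtain se \<alpha> s where r: "r = mkrun P E F ((se, \<alpha>), s)"
    and init: "se \<in> Ie F" "\<alpha> \<in> Adv F" "\<forall>i. s i \<in> Iset E i"
    using assms(2) unfolding runs_def by blast
  define A where "A = Aset E r m"
  have A: "i \<in> A \<longleftrightarrow> (\<forall>k<m. \<not> faulty E \<alpha> k i)" for i
    by (simp add: A_def Aset_def adv_of_def r)
  define r' where "r' = mkrun P E F ((se, heal m A \<alpha>), s)"
  have "heal m A \<alpha> \<in> Adv F"
    using heal_in_adv_set[of \<alpha> kd t E A m] init(2) assms(1) A by simp
  then have "r' \<in> runs P E F"
    unfolding runs_def r'_def using init by blast
  moreover have "lstate_of r' m = lstate_of r m"
    using mkrun_eq_if_adversaries_agree[of m "heal m A \<alpha>" \<alpha> m P E F se s]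
    by (simp add: lstate_of_def r'_def r fun_eq_iff)
  moreover have "Nset E r' m = A"
  proof (rule set_eqI)
    show "i \<in> Nset E r' m \<longleftrightarrow> i \<in> A" for i
      using A[of i] by (auto simp: Nset_def r'_def adv_of_def faulty_heal_iff)
  qed
  ultimately show ?thesis
    using A_def by blast
qed

theorem corollary11:
  fixes k :: fkind and t :: nat
    and E :: "('a::finite, 'i, 'x, 'm, 'v) iexchange"
    and P :: "('a, 'i, 'x, 'v) protocol"
    and F :: "('e, 'a, 'i, 'x, 'm, 'v) fmodel"
    and p :: "('a \<Rightarrow> ('i, 'x) lstate) \<Rightarrow> bool"
    and i :: 'a
  assumes "wf_exchange k E"
    and "is_fmodel k t E F"
  shows "\<forall>r\<in>runs P E F. \<forall>m.
           Bel (runs P E F) (Nset E) i (CB (runs P E F) (Nset E) (atom p)) r m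
       \<longleftrightarrow> Bel (runs P E F) (Aset E) i (CB (runs P E F) (Aset E) (atom p)) r m"
proof -
  have "Adv F = adv_set k t E"
    using assms(2) by (simp add: is_fmodel_def)
  then have twins: "\<exists>r'\<in>runs P E F. lstate_of r' m = lstate_of r m \<and> Nset E r' m = Aset E r m"
    if "r \<in> runs P E F" for r m
    using that by (rule exists_twin_run)
  have sub: "Nset E r m \<subseteq> Aset E r m" for r m
    by (auto simp: Nset_def Aset_def)
  have local: "atom p r' m = atom p r m" if "lstate_of r' m = lstate_of r m" for r r' m
    using that by (simp add: atom_def)
  show ?thesis
    using Bel_CB_iff_of_twins[of "Nset E" "Aset E" "runs P E F" "atom p" i, OF sub twins local]
    by simp
qed

end
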